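(* For every admissible sequence of bins $\sigma$ and all integers $s',\ell',k\ge 0$ with $2k\ge s'+2\ell'$, $$R(\sigma,0,k)\le \mathrm{OPT}(\sigma,s',\ell')+\min\{0,\ell'-s'\}\,S+(k-\ell')M.$$
   Context: Fix an integer $S>1$, $L=2S-1$, $M=4S-3$. Bins have integer sizes in $[S,M]$ and arrive in a sequence $\sigma$, admissible if it ends with at least as many bins of size $M$ as there are items under consideration. A packing assigns every item to a bin with total item size in each bin at most the bin size; its cost is the sum of the sizes of bins receiving at least one item. A packing is valid if each empty bin is smaller than every item packed in a later bin. A bin is wasteful if its empty space is at least the size of some item packed in a later bin; a packing is thrifty if no bin is wasteful. A partial packing of a finite sequence of bins is reasonable if every bin $b$ of that sequence contains: one item of size $S$ if $\mathrm{size}(b)\in[S,L-1]$; one item of size $L$ if $\mathrm{size}(b)=L$; two items of size $S$ or one item of size $L$ if $\mathrm{size}(b)\in[L+1,L+S-1]$; one item of size $S$ and one of size $L$ if $\mathrm{size}(b)=L+S$; three items of size $S$ or one item of size $S$ and one of size $L$ if $\mathrm{size}(b)\in[L+S+1,2L-1]$. The key bin of a packing is the first bin after which no item of size $L$ remains unpacked or at most two items of size $S$ remain unpacked; the front is the restriction of the packing to the prefix ending with the key bin. A packing is reasonable if it is thrifty and its front is reasonable. $\mathrm{OPT}(\sigma,s,\ell)$ is the minimum cost of a valid packing of $s$ items of size $S$ and $\ell$ items of size $L$ into $\sigma$; $R(\sigma,s,\ell)$ is the maximum cost of a reasonable packing of these items into $\sigma$. *)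

theory Defs
  imports Main "HOL-Library.Extended_Real"
begin

text \<open>Items: for an instance with s items of size S and l items of size L,
  items are numbered 0 ..< s + l; item i has size S if i < s and size L otherwise.\<close>

definition Lsz :: "nat \<Rightarrow> nat" where "Lsz S = 2 * S - 1"
definition Msz :: "nat \<Rightarrow> nat" where "Msz S = 4 * S - 3"

definition bins_ok :: "nat \<Rightarrow> nat list \<Rightarrow> bool" where
  "bins_ok S \<sigma> \<longleftrightarrow> (\<forall>b\<in>set \<sigma>. S \<le> b \<and> b \<le> Msz S)"

definition admissible :: "nat \<Rightarrow> nat list \<Rightarrow> nat \<Rightarrow> bool" where
  "admissible S \<sigma> n \<longleftrightarrow> (\<exists>\<rho>. \<sigma> = \<rho> @ replicate n (Msz S))"

definition isz :: "nat \<Rightarrow> nat \<Rightarrow> nat \<Rightarrow> nat" where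
  "isz S s i = (if i < s then S else Lsz S)"

definition load :: "nat \<Rightarrow> nat \<Rightarrow> nat \<Rightarrow> (nat \<Rightarrow> nat) \<Rightarrow> nat \<Rightarrow> nat" where
  "load S s l f b = (\<Sum>i\<in>{i. i < s + l \<and> f i = b}. isz S s i)"

definition used :: "nat \<Rightarrow> nat \<Rightarrow> (nat \<Rightarrow> nat) \<Rightarrow> nat \<Rightarrow> bool" where
  "used s l f b \<longleftrightarrow> (\<exists>i < s + l. f i = b)"

definition is_packing :: "nat \<Rightarrow> nat list \<Rightarrow> nat \<Rightarrow> nat \<Rightarrow> (nat \<Rightarrow> nat) \<Rightarrow> bool" where
  "is_packing S \<sigma> s l f \<longleftrightarrow>
     (\<forall>i < s + l. f i < length \<sigma>) \<and> (\<forall>b < length \<sigma>. load S s l f b \<le> \<sigma> ! b)"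

definition cost :: "nat list \<Rightarrow> nat \<Rightarrow> nat \<Rightarrow> (nat \<Rightarrow> nat) \<Rightarrow> nat" where
  "cost \<sigma> s l f = (\<Sum>b\<in>{b. b < length \<sigma> \<and> used s l f b}. \<sigma> ! b)"

definition valid :: "nat \<Rightarrow> nat list \<Rightarrow> nat \<Rightarrow> nat \<Rightarrow> (nat \<Rightarrow> nat) \<Rightarrow> bool" where
  "valid S \<sigma> s l f \<longleftrightarrow> is_packing S \<sigma> s l f \<and>
     (\<forall>b < length \<sigma>. \<not> used s l f b \<longrightarrow>
        (\<forall>i < s + l. b < f i \<longrightarrow> \<sigma> ! b < isz S s i))"

definition wasteful :: "nat \<Rightarrow> nat list \<Rightarrow> nat \<Rightarrow> nat \<Rightarrow> (nat \<Rightarrow> nat) \<Rightarrow> nat \<Rightarrow> bool" where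
  "wasteful S \<sigma> s l f b \<longleftrightarrow>
     (\<exists>i < s + l. b < f i \<and> isz S s i \<le> \<sigma> ! b - load S s l f b)"

definition thrifty :: "nat \<Rightarrow> nat list \<Rightarrow> nat \<Rightarrow> nat \<Rightarrow> (nat \<Rightarrow> nat) \<Rightarrow> bool" where
  "thrifty S \<sigma> s l f \<longleftrightarrow> is_packing S \<sigma> s l f \<and>
     (\<forall>b < length \<sigma>. \<not> wasteful S \<sigma> s l f b)"

definition key_bin :: "nat \<Rightarrow> nat \<Rightarrow> (nat \<Rightarrow> nat) \<Rightarrow> nat" where
  "key_bin s l f = (LEAST b. (\<forall>i. s \<le> i \<and> i < s + l \<longrightarrow> f i \<le> b)
                              \<or> card {i. i < s \<and> b < f i} \<le> 2)"

definition reasonable_bin :: "nat \<Rightarrow> nat list \<Rightarrow> nat \<Rightarrow> nat \<Rightarrow> (nat \<Rightarrow> nat) \<Rightarrow> nat \<Rightarrow> bool" where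
  "reasonable_bin S \<sigma> s l f b \<longleftrightarrow>
    (let cS = card {i. i < s \<and> f i = b};
         cL = card {i. s \<le> i \<and> i < s + l \<and> f i = b};
         L = Lsz S; z = \<sigma> ! b in
     (S \<le> z \<and> z \<le> L - 1 \<longrightarrow> cS = 1 \<and> cL = 0) \<and>
     (z = L \<longrightarrow> cS = 0 \<and> cL = 1) \<and>
     (L + 1 \<le> z \<and> z \<le> L + S - 1 \<longrightarrow> (cS = 2 \<and> cL = 0) \<or> (cS = 0 \<and> cL = 1)) \<and>
     (z = L + S \<longrightarrow> cS = 1 \<and> cL = 1) \<and>
     (L + S + 1 \<le> z \<and> z \<le> 2 * L - 1 \<longrightarrow> (cS = 3 \<and> cL = 0) \<or> (cS = 1 \<and> cL = 1)))"

definition reasonable :: "nat \<Rightarrow> nat list \<Rightarrow> nat \<Rightarrow> nat \<Rightarrow> (nat \<Rightarrow> nat) \<Rightarrow> bool" where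
  "reasonable S \<sigma> s l f \<longleftrightarrow> thrifty S \<sigma> s l f \<and>
     (\<forall>b. b \<le> key_bin s l f \<and> b < length \<sigma> \<longrightarrow> reasonable_bin S \<sigma> s l f b)"

text \<open>OPT: minimum cost of a valid packing; R: maximum cost of a reasonable packing
  (in the extended reals, so that the max of the empty set is -infinity)\<close>
definition OPT :: "nat \<Rightarrow> nat list \<Rightarrow> nat \<Rightarrow> nat \<Rightarrow> ereal" where
  "OPT S \<sigma> s l = Inf {ereal (real (cost \<sigma> s l f)) | f. valid S \<sigma> s l f}"

definition R :: "nat \<Rightarrow> nat list \<Rightarrow> nat \<Rightarrow> nat \<Rightarrow> ereal" where
  "R S \<sigma> s l = Sup {ereal (real (cost \<sigma> s l f)) | f. reasonable S \<sigma> s l f}"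

end

theory Submission
  imports Defs
begin

(* In a thrifty packing f of k items of size L every used bin holds exactly one item, since
   2L > M; so f uses k bins, all of size at least L.  In a valid packing (and thriftiness
   implies validity) an empty bin of size at least L can never precede a used bin, so the
   big bins used by f and the big bins used by a valid packing g of s' + l' items are both
   initial segments of the big bins, hence nested.  If f's bins lie inside g's, then
   cost f <= cost g and the correction term is nonnegative because 2k >= s' + 2l'.
   Otherwise f pays at most M for each of its bins that g leaves empty, and it suffices that
   the cost of g with its big bins rounded up to M is at least max(l'M, s'S + l'(M - S)).
   This holds bin by bin: a bin of size at most M holds at most one item of size L, and then
   at most one item of size S besides it. *)

definition small_items :: "nat \<Rightarrow> (nat \<Rightarrow> nat) \<Rightarrow> nat \<Rightarrow> nat set" where
  "small_items s f b = {i. i < s \<and> f i = b}"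

definition large_items :: "nat \<Rightarrow> nat \<Rightarrow> (nat \<Rightarrow> nat) \<Rightarrow> nat \<Rightarrow> nat set" where
  "large_items s l f b = {i. s \<le> i \<and> i < s + l \<and> f i = b}"

definition used_bins :: "nat list \<Rightarrow> nat \<Rightarrow> nat \<Rightarrow> (nat \<Rightarrow> nat) \<Rightarrow> nat set" where
  "used_bins \<sigma> s l f = {b. b < length \<sigma> \<and> used s l f b}"

definition big_bins :: "nat \<Rightarrow> nat list \<Rightarrow> nat set" where
  "big_bins S \<sigma> = {b. b < length \<sigma> \<and> Lsz S \<le> \<sigma> ! b}"

definition bin_weight :: "nat \<Rightarrow> nat \<Rightarrow> nat" where
  "bin_weight S z = (if Lsz S \<le> z then Msz S else z)"

definition rounded_cost :: "nat \<Rightarrow> nat list \<Rightarrow> nat \<Rightarrow> nat \<Rightarrow> (nat \<Rightarrow> nat) \<Rightarrow> nat" where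
  "rounded_cost S \<sigma> s l f = (\<Sum>b\<in>used_bins \<sigma> s l f. bin_weight S (\<sigma> ! b))"

lemma finite_used_bins [simp]: "finite (used_bins \<sigma> s l f)"
  by (simp add: used_bins_def)

lemma cost_eq_sum_used_bins: "cost \<sigma> s l f = (\<Sum>b\<in>used_bins \<sigma> s l f. \<sigma> ! b)"
  by (simp add: cost_def used_bins_def)

lemma isz_le_Lsz: "isz S s i \<le> Lsz S"
  by (auto simp: isz_def Lsz_def)

lemma load_eq_card_items:
  "load S s l f b = card (small_items s f b) * S + card (large_items s l f b) * Lsz S"
proof -
  have items: "{i. i < s + l \<and> f i = b} = small_items s f b \<union> large_items s l f b"
    by (auto simp: small_items_def large_items_def)
  have "load S s l f b = (\<Sum>i\<in>small_items s f b. isz S s i) + (\<Sum>i\<in>large_items s l f b. isz S s i)"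
    unfolding load_def items by (rule sum.union_disjoint) (auto simp: small_items_def large_items_def)
  then show ?thesis
    by (simp add: small_items_def large_items_def isz_def)
qed

lemma sum_card_fibres:
  assumes "finite A" "finite B" "g ` A \<subseteq> B"
  shows "(\<Sum>b\<in>B. card {i\<in>A. g i = b}) = card A"
  using sum.group[OF assms, of "\<lambda>_. 1::nat"] by simp

lemma packing_item_in_used_bin:
  "is_packing S \<sigma> s l f \<Longrightarrow> i < s + l \<Longrightarrow> f i \<in> used_bins \<sigma> s l f"
  by (auto simp: is_packing_def used_bins_def used_def)

lemma sum_card_small_items:
  assumes "is_packing S \<sigma> s l f"
  shows "(\<Sum>b\<in>used_bins \<sigma> s l f. card (small_items s f b)) = s"
proof -
  have "(\<Sum>b\<in>used_bins \<sigma> s l f. card {i\<in>{..<s}. f i = b}) = card {..<s}"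
    using packing_item_in_used_bin[OF assms] by (intro sum_card_fibres) auto
  then show ?thesis by (simp add: small_items_def)
qed

lemma sum_card_large_items:
  assumes "is_packing S \<sigma> s l f"
  shows "(\<Sum>b\<in>used_bins \<sigma> s l f. card (large_items s l f b)) = l"
proof -
  have "(\<Sum>b\<in>used_bins \<sigma> s l f. card {i\<in>{s..<s+l}. f i = b}) = card {s..<s+l}"
    using packing_item_in_used_bin[OF assms] by (intro sum_card_fibres) auto
  then show ?thesis by (simp add: large_items_def)
qed

lemma packing_load_le:
  "is_packing S \<sigma> s l f \<Longrightarrow> b < length \<sigma> \<Longrightarrow>
    card (small_items s f b) * S + card (large_items s l f b) * Lsz S \<le> \<sigma> ! b"
  by (metis is_packing_def load_eq_card_items)

lemma bins_ok_le_Msz: "bins_ok S \<sigma> \<Longrightarrow> b < length \<sigma> \<Longrightarrow> \<sigma> ! b \<le> Msz S"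
  by (simp add: bins_ok_def)

lemma card_large_items_le_1:
  assumes "S > 1" "bins_ok S \<sigma>" "is_packing S \<sigma> s l f" "b < length \<sigma>"
  shows "card (large_items s l f b) \<le> 1"
proof (rule ccontr)
  assume "\<not> ?thesis"
  then have "2 * Lsz S \<le> card (large_items s l f b) * Lsz S" by simp
  also have "\<dots> \<le> \<sigma> ! b" using packing_load_le[OF assms(3,4)] by linarith
  also have "\<dots> \<le> Msz S" using bins_ok_le_Msz[OF assms(2,4)] .
  finally show False using \<open>S > 1\<close> by (simp add: Lsz_def Msz_def)
qed

lemma one_le_card_large_items:
  assumes "b \<in> used_bins \<sigma> 0 l f"
  shows "card (large_items 0 l f b) \<ge> 1"
proof -
  obtain i where "i \<in> large_items 0 l f b"
    using assms by (auto simp: used_bins_def used_def large_items_def)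
  moreover have "finite (large_items 0 l f b)" by (simp add: large_items_def)
  ultimately show ?thesis by (metis One_nat_def Suc_leI card_gt_0_iff empty_iff)
qed

lemma card_used_bins_large_only:
  assumes "S > 1" "bins_ok S \<sigma>" "is_packing S \<sigma> 0 l f"
  shows "card (used_bins \<sigma> 0 l f) = l"
proof -
  have "card (large_items 0 l f b) = 1" if "b \<in> used_bins \<sigma> 0 l f" for b
    using that one_le_card_large_items card_large_items_le_1[OF assms]
    by (force simp: used_bins_def)
  then show ?thesis
    using sum_card_large_items[OF assms(3)] by simp
qed

lemma used_bins_large_only_subset_big_bins:
  assumes "is_packing S \<sigma> 0 l f"
  shows "used_bins \<sigma> 0 l f \<subseteq> big_bins S \<sigma>"
proof
  fix b assume b: "b \<in> used_bins \<sigma> 0 l f"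
  then have "Lsz S \<le> card (large_items 0 l f b) * Lsz S"
    using one_le_card_large_items by simp
  also have "\<dots> \<le> \<sigma> ! b"
    using packing_load_le[OF assms] b by (force simp: used_bins_def small_items_def)
  finally show "b \<in> big_bins S \<sigma>" using b by (simp add: big_bins_def used_bins_def)
qed

lemma thrifty_imp_valid:
  assumes "thrifty S \<sigma> s l f"
  shows "valid S \<sigma> s l f"
proof -
  have "\<sigma> ! b < isz S s i"
    if "b < length \<sigma>" "\<not> used s l f b" "i < s + l" "b < f i" for b i
  proof -
    have "load S s l f b = 0" using that(2) by (auto simp: load_def used_def)
    then show ?thesis
      using assms that by (auto simp: thrifty_def wasteful_def not_le)
  qed
  then show ?thesis using assms by (simp add: valid_def thrifty_def)
qed

lemma valid_big_bin_before_used_bin: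
  assumes "valid S \<sigma> s l f" "b \<in> big_bins S \<sigma>" "b' \<in> used_bins \<sigma> s l f" "b < b'"
  shows "b \<in> used_bins \<sigma> s l f"
proof (rule ccontr)
  assume "b \<notin> used_bins \<sigma> s l f"
  moreover obtain i where "i < s + l" "f i = b'"
    using assms(3) by (auto simp: used_bins_def used_def)
  ultimately have "\<sigma> ! b < isz S s i"
    using assms by (auto simp: valid_def used_bins_def big_bins_def)
  then show False using isz_le_Lsz[of S s i] assms(2) by (simp add: big_bins_def)
qed

lemma downward_closed_subsets_comparable:
  fixes A B C :: "'a::linorder set"
  assumes "A \<subseteq> C" "B \<subseteq> C"
    and "\<And>x y. x \<in> C \<Longrightarrow> y \<in> A \<Longrightarrow> x < y \<Longrightarrow> x \<in> A"
    and "\<And>x y. x \<in> C \<Longrightarrow> y \<in> B \<Longrightarrow> x < y \<Longrightarrow> x \<in> B"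
  shows "A \<subseteq> B \<or> B \<subseteq> A"
  using assms by (metis linorder_neqE subsetD subsetI)

lemma bin_weight_bounds:
  assumes "S > 1" "j * S + e * Lsz S \<le> z" "z \<le> Msz S"
  shows "j * S + e * (Msz S - S) \<le> bin_weight S z" "e * Msz S \<le> bin_weight S z"
proof -
  have "j * S + e * (Msz S - S) \<le> bin_weight S z \<and> e * Msz S \<le> bin_weight S z"
  proof (cases "e = 0")
    case True
    then show ?thesis using assms by (simp add: bin_weight_def)
  next
    case False
    have "Lsz S \<le> e * Lsz S" using False by simp
    then have "e * Lsz S \<le> Msz S" "j * S + Lsz S \<le> Msz S"
      using assms(2,3) by linarith+
    moreover have "Msz S < 2 * Lsz S" "Msz S < 2 * S + Lsz S"
      using assms(1) by (simp_all add: Lsz_def Msz_def)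
    ultimately have "e * Lsz S < 2 * Lsz S" "j * S < 2 * S" by linarith+
    then have "e = 1" "j \<le> 1" using False by auto
    then show ?thesis using assms by (cases j) (auto simp: bin_weight_def Lsz_def Msz_def)
  qed
  then show "j * S + e * (Msz S - S) \<le> bin_weight S z" "e * Msz S \<le> bin_weight S z" by auto
qed

lemma rounded_cost_lower_bounds:
  assumes "S > 1" "bins_ok S \<sigma>" "is_packing S \<sigma> s l g"
  shows "s * S + l * (Msz S - S) \<le> rounded_cost S \<sigma> s l g"
    and "l * Msz S \<le> rounded_cost S \<sigma> s l g"
proof -
  let ?U = "used_bins \<sigma> s l g"
  let ?j = "\<lambda>b. card (small_items s g b)" and ?e = "\<lambda>b. card (large_items s l g b)"
  have bounds: "?j b * S + ?e b * (Msz S - S) \<le> bin_weight S (\<sigma> ! b)"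
    "?e b * Msz S \<le> bin_weight S (\<sigma> ! b)" if "b \<in> ?U" for b
    using that bin_weight_bounds[OF assms(1) packing_load_le[OF assms(3)] bins_ok_le_Msz[OF assms(2)]]
    by (auto simp: used_bins_def)
  have sums: "(\<Sum>b\<in>?U. ?j b) = s" "(\<Sum>b\<in>?U. ?e b) = l"
    using sum_card_small_items[OF assms(3)] sum_card_large_items[OF assms(3)] .
  have "s * S + l * (Msz S - S) = (\<Sum>b\<in>?U. ?j b * S + ?e b * (Msz S - S))"
    unfolding sum.distrib sum_distrib_right[symmetric] sums ..
  also have "\<dots> \<le> rounded_cost S \<sigma> s l g"
    unfolding rounded_cost_def using bounds(1) by (rule sum_mono)
  finally show "s * S + l * (Msz S - S) \<le> rounded_cost S \<sigma> s l g" .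
  have "l * Msz S = (\<Sum>b\<in>?U. ?e b * Msz S)"
    unfolding sum_distrib_right[symmetric] sums ..
  also have "\<dots> \<le> rounded_cost S \<sigma> s l g"
    unfolding rounded_cost_def using bounds(2) by (rule sum_mono)
  finally show "l * Msz S \<le> rounded_cost S \<sigma> s l g" .
qed

lemma rounded_cost_eq:
  "rounded_cost S \<sigma> s l g = card (used_bins \<sigma> s l g \<inter> big_bins S \<sigma>) * Msz S
     + (\<Sum>b\<in>used_bins \<sigma> s l g - big_bins S \<sigma>. \<sigma> ! b)"
proof -
  let ?U = "used_bins \<sigma> s l g"
  have "?U \<inter> {b. Lsz S \<le> \<sigma> ! b} = ?U \<inter> big_bins S \<sigma>"
    "?U \<inter> - {b. Lsz S \<le> \<sigma> ! b} = ?U - big_bins S \<sigma>"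
    by (auto simp: used_bins_def big_bins_def)
  then show ?thesis
    unfolding rounded_cost_def bin_weight_def by (simp add: sum.If_cases)
qed

lemma cost_add_rounded_cost_le:
  assumes "S > 1" "bins_ok S \<sigma>" "is_packing S \<sigma> 0 k f"
    and "used_bins \<sigma> s l g \<inter> big_bins S \<sigma> \<subseteq> used_bins \<sigma> 0 k f"
  shows "cost \<sigma> 0 k f + rounded_cost S \<sigma> s l g \<le> cost \<sigma> s l g + k * Msz S"
proof -
  define F where "F = used_bins \<sigma> 0 k f"
  define U where "U = used_bins \<sigma> s l g"
  define G where "G = U \<inter> big_bins S \<sigma>"
  define P where "P = (\<Sum>b\<in>G. \<sigma> ! b)"
  define Q where "Q = (\<Sum>b\<in>U - big_bins S \<sigma>. \<sigma> ! b)"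
  have "G \<subseteq> F" "finite F" using assms(4) by (simp_all add: F_def U_def G_def)
  have "card F = k" unfolding F_def using card_used_bins_large_only[OF assms(1-3)] .
  then have "card G \<le> k" using card_mono[OF \<open>finite F\<close> \<open>G \<subseteq> F\<close>] by simp
  have "cost \<sigma> 0 k f = P + (\<Sum>b\<in>F - G. \<sigma> ! b)"
    unfolding cost_eq_sum_used_bins P_def F_def[symmetric]
    using sum.subset_diff[OF \<open>G \<subseteq> F\<close> \<open>finite F\<close>] by (simp add: add.commute)
  also have "(\<Sum>b\<in>F - G. \<sigma> ! b) \<le> (\<Sum>b\<in>F - G. Msz S)"
    using assms(2) by (intro sum_mono) (auto simp: F_def used_bins_def bins_ok_le_Msz)
  also have "\<dots> = (k - card G) * Msz S"
    using card_Diff_subset[OF finite_subset[OF \<open>G \<subseteq> F\<close> \<open>finite F\<close>] \<open>G \<subseteq> F\<close>] \<open>card F = k\<close>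
    by simp
  finally have "cost \<sigma> 0 k f \<le> P + (k - card G) * Msz S" by simp
  moreover have "cost \<sigma> s l g = P + Q"
  proof -
    have "U - G = U - big_bins S \<sigma>" by (auto simp: G_def)
    then show ?thesis
      unfolding cost_eq_sum_used_bins P_def Q_def U_def[symmetric]
      using sum.subset_diff[of G U "nth \<sigma>"] by (simp add: G_def U_def add.commute)
  qed
  moreover have "rounded_cost S \<sigma> s l g = card G * Msz S + Q"
    by (simp add: rounded_cost_eq G_def Q_def U_def)
  moreover have "(k - card G) * Msz S + card G * Msz S = k * Msz S"
    using \<open>card G \<le> k\<close> by (simp flip: add_mult_distrib)
  ultimately show ?thesis by linarith
qed

lemma bound_correction_nonneg:
  assumes "S > 1" "s + 2 * l \<le> 2 * k"
  shows "0 \<le> min 0 (int l - int s) * int S + (int k - int l) * int (Msz S)"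
proof -
  have "- int s * int S \<le> min 0 (int l - int s) * int S"
    by (intro mult_right_mono) auto
  moreover have "int s * int S \<le> (int k - int l) * int (Msz S)"
  proof -
    have "int s * int S \<le> (2 * (int k - int l)) * int S"
      using assms(2) by (intro mult_right_mono) auto
    also have "\<dots> = (int k - int l) * (2 * int S)" by simp
    also have "\<dots> \<le> (int k - int l) * int (Msz S)"
      using assms by (intro mult_left_mono) (auto simp: Msz_def)
    finally show ?thesis .
  qed
  ultimately show ?thesis by linarith
qed

lemma thrifty_cost_le_valid_cost:
  assumes "S > 1" "bins_ok S \<sigma>" "s' + 2 * l' \<le> 2 * k"
    and "thrifty S \<sigma> 0 k f" "valid S \<sigma> s' l' g"
  shows "int (cost \<sigma> 0 k f) \<le> int (cost \<sigma> s' l' g)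
           + (min 0 (int l' - int s') * int S + (int k - int l') * int (Msz S))"
proof -
  let ?F = "used_bins \<sigma> 0 k f" and ?G = "used_bins \<sigma> s' l' g \<inter> big_bins S \<sigma>"
  have pf: "is_packing S \<sigma> 0 k f" using assms(4) by (simp add: thrifty_def)
  have pg: "is_packing S \<sigma> s' l' g" using assms(5) by (simp add: valid_def)
  have "?F \<subseteq> ?G \<or> ?G \<subseteq> ?F"
  proof (rule downward_closed_subsets_comparable)
    show "?F \<subseteq> big_bins S \<sigma>" using used_bins_large_only_subset_big_bins[OF pf] .
    show "x \<in> ?F" if "x \<in> big_bins S \<sigma>" "y \<in> ?F" "x < y" for x y
      using valid_big_bin_before_used_bin[OF thrifty_imp_valid[OF assms(4)]] that .
    show "x \<in> ?G" if "x \<in> big_bins S \<sigma>" "y \<in> ?G" "x < y" for x y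
      using valid_big_bin_before_used_bin[OF assms(5)] that by blast
  qed simp
  then show ?thesis
  proof
    assume "?F \<subseteq> ?G"
    then have "cost \<sigma> 0 k f \<le> cost \<sigma> s' l' g"
      unfolding cost_eq_sum_used_bins by (intro sum_mono2) auto
    with bound_correction_nonneg[OF assms(1,3)] show ?thesis by linarith
  next
    assume "?G \<subseteq> ?F"
    then have "cost \<sigma> 0 k f + rounded_cost S \<sigma> s' l' g \<le> cost \<sigma> s' l' g + k * Msz S"
      by (rule cost_add_rounded_cost_le[OF assms(1,2) pf])
    then have total: "int (cost \<sigma> 0 k f) + int (rounded_cost S \<sigma> s' l' g)
        \<le> int (cost \<sigma> s' l' g) + int k * int (Msz S)"
      by (simp only: of_nat_add [symmetric] of_nat_mult [symmetric] of_nat_le_iff)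
    have small: "int s' * int S + int l' * int (Msz S) - int l' * int S \<le> rounded_cost S \<sigma> s' l' g"
    proof -
      have "S \<le> Msz S" using assms(1) by (simp add: Msz_def)
      then have "int (s' * S + l' * (Msz S - S)) = int s' * int S + int l' * int (Msz S) - int l' * int S"
        by (simp add: of_nat_diff right_diff_distrib)
      with rounded_cost_lower_bounds(1)[OF assms(1,2) pg] show ?thesis by linarith
    qed
    have large: "int l' * int (Msz S) \<le> rounded_cost S \<sigma> s' l' g"
      using rounded_cost_lower_bounds(2)[OF assms(1,2) pg]
      by (simp only: of_nat_mult [symmetric] of_nat_le_iff)
    show ?thesis
    proof (cases "l' \<le> s'")
      case True
      then have "min 0 (int l' - int s') = int l' - int s'" by simp
      with total small show ?thesis by (simp add: algebra_simps)
    next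
      case False
      then have "min 0 (int l' - int s') = 0" by simp
      with total large show ?thesis by (simp add: algebra_simps)
    qed
  qed
qed

lemma Sup_le_Inf_add_ereal:
  fixes X Y :: "ereal set"
  assumes "\<And>x y. x \<in> X \<Longrightarrow> y \<in> Y \<Longrightarrow> x \<le> y + ereal c"
  shows "Sup X \<le> Inf Y + ereal c"
proof (rule Sup_least)
  fix x assume "x \<in> X"
  have "x - ereal c \<le> Inf Y"
  proof (rule Inf_greatest)
    fix y assume "y \<in> Y"
    then show "x - ereal c \<le> y" using assms[OF \<open>x \<in> X\<close>] ereal_minus_le[of "ereal c" x] by simp
  qed
  then show "x \<le> Inf Y + ereal c" using ereal_minus_le[of "ereal c" x] by simp
qed

theorem lemma8:
  fixes S :: nat and \<sigma> :: "nat list" and s' l' k :: nat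
  assumes "S > 1"
    and "bins_ok S \<sigma>"
    and "admissible S \<sigma> k"
    and "admissible S \<sigma> (s' + l')"
    and "2 * k \<ge> s' + 2 * l'"
  shows "R S \<sigma> 0 k \<le> OPT S \<sigma> s' l'
           + ereal (real_of_int (min 0 (int l' - int s') * int S
                                 + (int k - int l') * int (Msz S)))"
  unfolding R_def OPT_def
proof (rule Sup_le_Inf_add_ereal, clarify)
  fix f g assume "reasonable S \<sigma> 0 k f" "valid S \<sigma> s' l' g"
  then have "int (cost \<sigma> 0 k f) \<le> int (cost \<sigma> s' l' g)
      + (min 0 (int l' - int s') * int S + (int k - int l') * int (Msz S))"
    using thrifty_cost_le_valid_cost[OF assms(1,2,5)] by (simp add: reasonable_def)
  then show "ereal (real (cost \<sigma> 0 k f)) \<le> ereal (real (cost \<sigma> s' l' g))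
      + ereal (real_of_int (min 0 (int l' - int s') * int S + (int k - int l') * int (Msz S)))"
    by (simp only: of_int_le_iff [where 'a = real, symmetric]) simp
qed

end
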